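(* Let $q$ be a prime power and $\mathcal{L}$ a non-empty set of lines of $\mathrm{PG}(n,q)$ satisfying (Pt), (Pl), (Sd) and (To) (see context). Let $M$ be a subspace of $\mathrm{PG}(n,q)$ and let $\ell\in\mathcal{L}$ be a line meeting $M$ in exactly one point. (a) If $\ell$ meets no line of $\mathcal{L}_M$, then $|\mathcal{L}|\ge q|\mathcal{L}_M|+1$. (b) If $\ell$ meets a line $s\in\mathcal{L}_M$ which contains exactly $\alpha$ $(q+1)$-$M$-points, then $|\mathcal{L}|\ge q|\mathcal{L}_M|-\alpha q^2+\alpha q+1\ge q|\mathcal{L}_M|-q^3+q^2+1$.
   Context: (Pt): every point of $\mathrm{PG}(n,q)$ lies on $0$ or $q+1$ lines of $\mathcal{L}$. (Pl): every plane contains $0$, $1$ or $q+1$ lines of $\mathcal{L}$. (Sd): every solid ($3$-dimensional subspace) contains $0$, $1$, $q+1$ or $2q+1$ lines of $\mathcal{L}$. (To): $|\mathcal{L}|\le q^5+q^4+q^3+q^2+q+1$. For a subspace $W$, $\mathcal{L}_W$ denotes the set of lines of $\mathcal{L}$ contained in $W$. A point $P$ is a $(q+1)$-$M$-point if exactly $q+1$ lines of $\mathcal{L}$ pass through $P$ and are contained in $M$. *)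

theory Defs
  imports "HOL-Analysis.Analysis"
begin

text \<open>Model of PG(n,q): the finite field 'a of order q = CARD('a) (any prime power
arises this way), vector space 'a^'m with CARD('m) = n+1.  A projective subspace of
projective dimension k is a linear subspace of (vector) dimension k+1.\<close>

definition psubspace :: "('a::{field,finite}^'m) set \<Rightarrow> bool" where
  "psubspace S \<longleftrightarrow> vec.subspace S"

definition pdim_set :: "nat \<Rightarrow> ('a::{field,finite}^'m) set set" where
  "pdim_set k = {S. vec.subspace S \<and> vec.dim S = k + 1}"

abbreviation ppoints :: "('a::{field,finite}^'m) set set" where "ppoints \<equiv> pdim_set 0"
abbreviation plines :: "('a::{field,finite}^'m) set set" where "plines \<equiv> pdim_set 1"
abbreviation pplanes :: "('a::{field,finite}^'m) set set" where "pplanes \<equiv> pdim_set 2"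
abbreviation psolids :: "('a::{field,finite}^'m) set set" where "psolids \<equiv> pdim_set 3"

definition pmeet :: "('a::{field,finite}^'m) set \<Rightarrow> ('a^'m) set \<Rightarrow> bool" where
  "pmeet U W \<longleftrightarrow> (\<exists>P\<in>ppoints. P \<subseteq> U \<and> P \<subseteq> W)"

definition lines_in :: "('a::{field,finite}^'m) set set \<Rightarrow> ('a^'m) set \<Rightarrow> ('a^'m) set set" where
  "lines_in L W = {l \<in> L. l \<subseteq> W}"

definition cond_Pt :: "('a::{field,finite}^'m) set set \<Rightarrow> bool" where
  "cond_Pt L \<longleftrightarrow> (\<forall>P\<in>ppoints. card {l\<in>L. P \<subseteq> l} \<in> {0, CARD('a) + 1})"

definition cond_Pl :: "('a::{field,finite}^'m) set set \<Rightarrow> bool" where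
  "cond_Pl L \<longleftrightarrow> (\<forall>E\<in>pplanes. card (lines_in L E) \<in> {0, 1, CARD('a) + 1})"

definition cond_Sd :: "('a::{field,finite}^'m) set set \<Rightarrow> bool" where
  "cond_Sd L \<longleftrightarrow> (\<forall>S\<in>psolids. card (lines_in L S) \<in> {0, 1, CARD('a) + 1, 2 * CARD('a) + 1})"

definition cond_To :: "('a::{field,finite}^'m) set set \<Rightarrow> bool" where
  "cond_To L \<longleftrightarrow> (let q = CARD('a) in card L \<le> q^5 + q^4 + q^3 + q^2 + q + 1)"

definition qM_points :: "('a::{field,finite}^'m) set set \<Rightarrow> ('a^'m) set \<Rightarrow> ('a^'m) set set" where
  "qM_points L M = {P\<in>ppoints. card {l \<in> lines_in L M. P \<subseteq> l} = CARD('a) + 1}"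

end

theory Submission
  imports Defs
begin

text \<open>Write \<open>P = l \<inter> M\<close> and call a line \<open>s \<in> L\<^sub>M\<close> skew to \<open>l\<close> isolated if it is the
  only line of \<open>L\<close> in the plane \<open>\<langle>P, s\<rangle>\<close>. Such an \<open>s\<close> forces at least \<open>q - 1\<close> lines of \<open>L\<close>
  in the solid \<open>\<langle>l, s\<rangle>\<close> that are skew to \<open>l\<close> and not in \<open>M\<close>: if some line \<open>u\<close> of \<open>L\<close> meets
  both \<open>l\<close> and \<open>s\<close>, the remaining lines of \<open>L\<close> through \<open>u \<inter> s\<close> do, and otherwise (Sd) gives
  at least \<open>q - 1\<close> further lines of \<open>L\<close> in the solid. The key tool is that by (Pl) and (Sd)
  concurrent lines of \<open>L\<close> are coplanar, so a point on two lines of \<open>L\<close> carries a full plane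
  pencil of lines of \<open>L\<close>. The families for different isolated lines are disjoint, so together
  with \<open>L\<^sub>M\<close> and the \<open>q\<close> lines of \<open>L\<close> through \<open>P\<close> outside \<open>M\<close> one gets
  \<open>|L| \<ge> |L\<^sub>M| + q + (q - 1) |G|\<close> for every set \<open>G\<close> of isolated lines. In case (a) all of
  \<open>L\<^sub>M\<close> is isolated. In case (b) every line of \<open>L\<^sub>M\<close> skew to \<open>s\<close> is isolated, and every other
  line of \<open>L\<^sub>M\<close> is \<open>s\<close> or one of the \<open>q\<close> further lines of \<open>L\<^sub>M\<close> through one of the \<open>\<alpha>\<close>
  \<open>(q+1)\<close>-\<open>M\<close>-points of \<open>s\<close>; moreover \<open>\<alpha> \<le> q\<close> since \<open>P\<close> itself is not such a point.\<close>

section \<open>Subspaces and projective dimension\<close>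

lemma card_field_ge_2: "CARD('a::{field,finite}) \<ge> 2"
proof -
  have "card {0::'a, 1} \<le> CARD('a)" by (rule card_mono) auto
  thus ?thesis by simp
qed

abbreviation join :: "('a::field^'m) set \<Rightarrow> ('a^'m) set \<Rightarrow> ('a^'m) set" where
  "join A B \<equiv> vec.span (A \<union> B)"

lemma join_upper1: "A \<subseteq> join A B"
  by (meson Un_subset_iff vec.span_superset)

lemma join_upper2: "B \<subseteq> join A B"
  by (meson Un_subset_iff vec.span_superset)

lemma join_least: "vec.subspace C \<Longrightarrow> A \<subseteq> C \<Longrightarrow> B \<subseteq> C \<Longrightarrow> join A B \<subseteq> C"
  by (simp add: vec.span_minimal)

lemma dim_join_plus_dim_Int:
  fixes S T :: "('a::field^'m) set"
  assumes "vec.subspace S" "vec.subspace T"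
  shows "vec.dim (join S T) + vec.dim (S \<inter> T) = vec.dim S + vec.dim T"
proof -
  have e: "vec.span S = S" "vec.span T = T" using assms by (auto simp: vec.span_eq_iff)
  show ?thesis using vec.dim_sums_Int[OF assms] vec.span_Un[of S T] unfolding e by simp
qed

lemma dim_join_skew:
  fixes S T :: "('a::field^'m) set"
  assumes "vec.subspace S" "vec.subspace T" "S \<inter> T \<subseteq> {0}"
  shows "vec.dim (join S T) = vec.dim S + vec.dim T"
proof -
  have "vec.dim (S \<inter> T) = 0" using assms(3) by simp
  thus ?thesis using dim_join_plus_dim_Int[OF assms(1,2)] by linarith
qed

lemma dim_ge_1_if_nonzero:
  fixes A :: "('a::field^'m) set"
  assumes "vec.subspace A" "v \<in> A" "v \<noteq> 0"
  shows "vec.dim A \<ge> 1"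
proof -
  have "vec.dim (vec.span {v}) \<le> vec.dim A"
    using assms by (intro vec.dim_subset) (simp add: vec.span_minimal)
  moreover have "vec.dim (vec.span {v}) = 1"
    using assms by (simp add: vec.dim_span_eq_card_independent)
  ultimately show ?thesis by simp
qed

lemma exists_nonzero_if_dim_ge_1:
  fixes A :: "('a::field^'m) set"
  assumes "vec.dim A \<ge> 1"
  shows "\<exists>v\<in>A. v \<noteq> 0"
  using assms vec.dim_eq_0[of A] by (metis not_one_le_zero subsetI singletonI)

lemma subspaces_meet_if_dim_gt:
  fixes A B C :: "('a::field^'m) set"
  assumes "vec.subspace A" "vec.subspace B" "vec.subspace C" "A \<subseteq> C" "B \<subseteq> C"
    and "vec.dim C < vec.dim A + vec.dim B"
  obtains x where "x \<in> A" "x \<in> B" "x \<noteq> 0"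
proof -
  have "vec.dim (join A B) \<le> vec.dim C"
    using assms(3-5) by (intro vec.dim_subset) (simp add: join_least)
  hence "vec.dim (A \<inter> B) \<ge> 1" using dim_join_plus_dim_Int[OF assms(1,2)] assms(6) by linarith
  thus thesis using exists_nonzero_if_dim_ge_1 that by blast
qed

lemma pdim_set_subset_eq:
  assumes "S \<in> pdim_set k" "T \<in> pdim_set k" "S \<subseteq> T"
  shows "S = T"
proof -
  have "vec.subspace S" "vec.subspace T" "vec.dim T \<le> vec.dim S"
    using assms(1,2) by (auto simp: pdim_set_def)
  thus ?thesis using vec.subspace_dim_equal assms(3) by blast
qed

lemma Int_join_subset_join_Int:
  fixes M l s :: "('a::field^'m) set"
  assumes "vec.subspace M" "vec.subspace l" "vec.subspace s" "s \<subseteq> M"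
  shows "M \<inter> join l s \<subseteq> join (l \<inter> M) s"
proof
  fix w assume w: "w \<in> M \<inter> join l s"
  have e: "vec.span l = l" "vec.span s = s" using assms by (auto simp: vec.span_eq_iff)
  obtain x y where xy: "w = x + y" "x \<in> l" "y \<in> s" using w vec.span_Un[of l s] unfolding e
    by auto
  have yM: "y \<in> M" using xy assms by auto
  have "w - y \<in> M" using vec.subspace_diff[OF assms(1)] w yM by auto
  moreover have "x = w - y" using xy by simp
  ultimately have "x \<in> M" by simp
  hence "x \<in> join (l \<inter> M) s" using xy by (auto intro: vec.span_base)
  moreover have "y \<in> join (l \<inter> M) s" using xy by (auto intro: vec.span_base)
  ultimately show "w \<in> join (l \<inter> M) s" using xy by (simp add: vec.span_add)
qed

lemma span_insert_Int_subspace: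
  fixes W s :: "('a::field^'m) set"
  assumes "vec.subspace W" "vec.subspace s" "s \<subseteq> W" "v \<notin> W"
  shows "W \<inter> vec.span (insert v s) = s"
proof
  show "W \<inter> vec.span (insert v s) \<subseteq> s"
  proof
    fix w assume w: "w \<in> W \<inter> vec.span (insert v s)"
    have es: "vec.span s = s" using assms(2) by (simp add: vec.span_eq_iff)
    obtain k where k: "w - k *s v \<in> s" using w vec.span_breakdown_eq[of w v s] unfolding es
      by auto
    have "w - k *s v \<in> W" using k assms(3) by auto
    hence "w - (w - k *s v) \<in> W" using w vec.subspace_diff[OF assms(1)] by blast
    hence "k *s v \<in> W" by simp
    hence "k = 0" using assms(4) vec.subspace_scale[OF assms(1), of "k *s v" "inverse k"]
      by (cases "k = 0") (auto simp: vector_smult_assoc)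
    thus "w \<in> s" using k by simp
  qed
  show "s \<subseteq> W \<inter> vec.span (insert v s)" using assms(3)
    by (auto intro: vec.span_base)
qed

lemma skew_if_subset_span_insert:
  fixes l s t :: "('a::field^'m) set"
  assumes "vec.subspace l" "vec.subspace s" "vec.subspace t" "l \<inter> s \<subseteq> {0}"
    and "v \<in> l" "v \<notin> t" "t \<subseteq> vec.span (insert v s)"
  shows "l \<inter> t \<subseteq> {0}"
proof
  fix w assume w: "w \<in> l \<inter> t"
  have es: "vec.span s = s" using assms(2) by (simp add: vec.span_eq_iff)
  obtain k where k: "w - k *s v \<in> s"
    using w assms(7) vec.span_breakdown_eq[of w v s] unfolding es by auto
  moreover have "w - k *s v \<in> l" using w assms by (auto intro: vec.subspace_diff vec.subspace_scale)
  ultimately have wk: "w = k *s v" using assms(4) by auto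
  have "k = 0"
    using vec.subspace_scale[OF assms(3), of w "inverse k"] w assms(6) wk
    by (cases "k = 0") (auto simp: vector_smult_assoc)
  thus "w \<in> {0}" using wk by simp
qed

lemma span_singleton_in_ppoints:
  fixes v :: "'a::{field,finite}^'m"
  assumes "v \<noteq> 0"
  shows "vec.span {v} \<in> ppoints"
proof -
  have "vec.independent {v}" using assms by simp
  hence "vec.dim (vec.span {v}) = 1" by (simp add: vec.dim_span_eq_card_independent)
  thus ?thesis by (simp add: pdim_set_def)
qed

lemma ppointsE:
  fixes P :: "('a::{field,finite}^'m) set"
  assumes "P \<in> ppoints"
  obtains v where "v \<noteq> 0" "P = vec.span {v}"
proof -
  from assms have sP: "vec.subspace P" and dP: "vec.dim P = 1" by (auto simp: pdim_set_def)
  obtain B where B: "B \<subseteq> P" "vec.independent B" "P \<subseteq> vec.span B" "card B = vec.dim P"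
    using vec.basis_exists by blast
  then obtain v where v: "B = {v}" using dP by (auto simp: card_1_singleton_iff)
  have "vec.span B \<subseteq> P" using B sP by (simp add: vec.span_minimal)
  hence "P = vec.span {v}" using B v by auto
  moreover have "v \<noteq> 0" using B v by auto
  ultimately show thesis using that by blast
qed

lemma pmeet_iff:
  fixes A B :: "('a::{field,finite}^'m) set"
  assumes "vec.subspace A" "vec.subspace B"
  shows "pmeet A B \<longleftrightarrow> \<not> A \<inter> B \<subseteq> {0}"
proof
  assume "pmeet A B"
  then obtain P where P: "P \<in> ppoints" "P \<subseteq> A" "P \<subseteq> B"
    by (auto simp: pmeet_def)
  obtain v where "v \<noteq> 0" "P = vec.span {v}" using ppointsE[OF P(1)] by blast
  thus "\<not> A \<inter> B \<subseteq> {0}" using P by (auto intro: vec.span_base)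
next
  assume "\<not> A \<inter> B \<subseteq> {0}"
  then obtain v where v: "v \<noteq> 0" "v \<in> A" "v \<in> B" by blast
  have "vec.span {v} \<subseteq> A" "vec.span {v} \<subseteq> B" using v assms
    by (auto simp: vec.span_minimal)
  thus "pmeet A B" using span_singleton_in_ppoints[OF v(1)] by (auto simp: pmeet_def)
qed

lemma span_singleton_scale:
  fixes w :: "'a::field^'m"
  assumes "c \<noteq> 0" shows "vec.span {c *s w} = vec.span {w}"
proof -
  have "w = inverse c *s (c *s w)" using assms by (simp add: vector_smult_assoc)
  hence "w \<in> vec.span {c *s w}" by (metis vec.span_base vec.span_scale singletonI)
  moreover have "c *s w \<in> vec.span {w}" by (simp add: vec.span_base vec.span_scale)
  ultimately show ?thesis by (simp add: vec.span_eq)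
qed

lemma join_meeting_plines_in_pplanes:
  fixes a b :: "('a::{field,finite}^'m) set"
  assumes "a \<in> plines" "b \<in> plines" "a \<noteq> b" "v \<noteq> 0" "v \<in> a" "v \<in> b"
  shows "join a b \<in> pplanes"
proof -
  have sa: "vec.subspace a" and da: "vec.dim a = 2" and sb: "vec.subspace b" and db: "vec.dim b = 2"
    using assms by (auto simp: pdim_set_def)
  have si: "vec.subspace (a \<inter> b)" using sa sb by (rule vec.subspace_inter)
  have ge: "vec.dim (a \<inter> b) \<ge> 1" using dim_ge_1_if_nonzero[OF si, of v] assms by auto
  have "vec.dim (a \<inter> b) < 2"
  proof (rule ccontr)
    assume "\<not> ?thesis"
    hence "a \<inter> b = a" "a \<inter> b = b"
      using vec.subspace_dim_equal[OF si sa] vec.subspace_dim_equal[OF si sb] da db by auto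
    thus False using assms by auto
  qed
  hence "vec.dim (a \<inter> b) = 1" using ge by simp
  hence "vec.dim (join a b) = 3" using dim_join_plus_dim_Int[OF sa sb] da db by simp
  thus ?thesis by (simp add: pdim_set_def)
qed

lemma join_ppoints_in_plines:
  fixes P Q :: "('a::{field,finite}^'m) set"
  assumes "P \<in> ppoints" "Q \<in> ppoints" "P \<noteq> Q"
  shows "join P Q \<in> plines"
proof -
  have sP: "vec.subspace P" "vec.dim P = 1" and sQ: "vec.subspace Q" "vec.dim Q = 1"
    using assms by (auto simp: pdim_set_def)
  have si: "vec.subspace (P \<inter> Q)" using sP sQ by (simp add: vec.subspace_inter)
  have "vec.dim (P \<inter> Q) = 0"
  proof (rule ccontr)
    assume "\<not> ?thesis"
    hence "vec.dim (P \<inter> Q) \<ge> 1" by linarith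
    hence "P \<inter> Q = P" "P \<inter> Q = Q"
      using vec.subspace_dim_equal[OF si sP(1)] vec.subspace_dim_equal[OF si sQ(1)] sP sQ by auto
    thus False using assms by auto
  qed
  hence "vec.dim (join P Q) = 2" using dim_join_plus_dim_Int[OF sP(1) sQ(1)] sP sQ by linarith
  thus ?thesis by (simp add: pdim_set_def)
qed

lemma plines_eq_join_ppoints:
  fixes P Q t :: "('a::{field,finite}^'m) set"
  assumes "P \<in> ppoints" "Q \<in> ppoints" "P \<noteq> Q" "t \<in> plines" "P \<subseteq> t" "Q \<subseteq> t"
  shows "t = join P Q"
proof -
  have "join P Q \<subseteq> t" using assms by (intro join_least) (auto simp: pdim_set_def)
  thus ?thesis using pdim_set_subset_eq[OF join_ppoints_in_plines[OF assms(1-3)] assms(4)] by simp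
qed

lemma card_ppoints_on_line_le:
  fixes m :: "('a::{field,finite}^'m) set"
  assumes "m \<in> plines" shows "card {Y \<in> ppoints. Y \<subseteq> m} \<le> CARD('a) + 1"
proof -
  from assms have sm: "vec.subspace m" and dm: "vec.dim m = 2" by (auto simp: pdim_set_def)
  obtain B where B: "B \<subseteq> m" "vec.independent B" "m \<subseteq> vec.span B" "card B = vec.dim m"
    using vec.basis_exists by blast
  then obtain u v where uv: "B = {u,v}" using dm by (auto simp: card_2_iff)
  have mspan: "m \<subseteq> vec.span (insert v {u})" using B uv by (simp add: insert_commute)
  have points: "{Y \<in> ppoints. Y \<subseteq> m}
      \<subseteq> insert (vec.span {u}) (range (\<lambda>c. vec.span {c *s u + v}))"
  proof
    fix Y assume Y: "Y \<in> {Y \<in> ppoints. Y \<subseteq> m}"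
    then obtain w where w: "w \<noteq> 0" "Y = vec.span {w}" using ppointsE by blast
    hence "w \<in> m" using Y by (auto intro: vec.span_base)
    hence "w \<in> vec.span (insert v {u})" using mspan by auto
    then obtain k where "w - k *s v \<in> vec.span {u}" by (auto simp: vec.span_breakdown_eq)
    then obtain c where c: "w - k *s v = c *s u" by (auto simp: vec.span_singleton)
    show "Y \<in> insert (vec.span {u}) (range (\<lambda>c. vec.span {c *s u + v}))"
    proof (cases "k = 0")
      case True
      hence "w = c *s u" using c by simp
      moreover hence "c \<noteq> 0" using w by auto
      ultimately have "Y = vec.span {u}" using w span_singleton_scale by metis
      thus ?thesis by simp
    next
      case False
      have "w = k *s ((c / k) *s u + v)" using c False
        by (simp add: vector_smult_assoc vector_add_ldistrib algebra_simps)
      hence "Y = vec.span {(c / k) *s u + v}" using w span_singleton_scale[OF False] by metis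
      thus ?thesis by simp
    qed
  qed
  have "card {Y \<in> ppoints. Y \<subseteq> m}
      \<le> card (insert (vec.span {u}) (range (\<lambda>c. vec.span {c *s u + v})))"
    by (rule card_mono[OF _ points]) simp
  also have "\<dots> \<le> Suc (card (range (\<lambda>c. vec.span {c *s u + v})))"
    by (simp add: card_insert_le_m1 card_insert_if)
  also have "\<dots> \<le> Suc CARD('a)"
    using card_image_le[of UNIV "(\<lambda>c::'a. vec.span {c *s u + v})"] by simp
  finally show ?thesis by simp
qed

lemma plines_span_insertE:
  fixes a X :: "('a::{field,finite}^'m) set"
  assumes "a \<in> plines" "X = vec.span {x}" "x \<noteq> 0" "X \<subseteq> a"
  obtains u where "u \<in> a" "u \<notin> X" "a = vec.span {x, u}"
proof -
  have sa: "vec.subspace a" and da: "vec.dim a = 2" using assms by (auto simp: pdim_set_def)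
  have dX: "vec.dim X = 1" using span_singleton_in_ppoints[OF assms(3)] assms(2)
    by (simp add: pdim_set_def)
  have "\<not> a \<subseteq> X"
  proof
    assume "a \<subseteq> X" hence "vec.dim a \<le> vec.dim X" by (rule vec.dim_subset)
    thus False using da dX by simp
  qed
  then obtain u where u: "u \<in> a" "u \<notin> X" by blast
  have xa: "x \<in> a" using assms by (auto intro: vec.span_base)
  have ind: "vec.independent (insert u {x})"
    using u assms by (rule_tac vec.independent_insertI) auto
  have ux: "u \<noteq> x" using u assms by (auto intro: vec.span_base)
  have d2: "vec.dim (vec.span {x, u}) = 2"
    using vec.dim_span_eq_card_independent[OF ind] ux by (simp add: insert_commute)
  have "vec.span {x, u} \<subseteq> a" using xa u sa by (simp add: vec.span_minimal)
  hence "vec.span {x, u} = a" using vec.subspace_dim_equal[OF _ sa] d2 da by simp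
  hence eq: "a = vec.span {x, u}" by simp
  show ?thesis by (rule that[OF u eq])
qed

lemma exists_pline_avoiding_ppoint:
  fixes X a b :: "('a::{field,finite}^'m) set"
  assumes X: "X \<in> ppoints" and ab: "a \<in> plines" "b \<in> plines" "a \<noteq> b"
    and sub: "X \<subseteq> a" "X \<subseteq> b"
  obtains m where "m \<in> plines" "m \<subseteq> join a b" "\<not> X \<subseteq> m"
proof -
  obtain x where x: "x \<noteq> 0" "X = vec.span {x}" using ppointsE[OF X] by blast
  obtain u where u: "u \<in> a" "u \<notin> X" "a = vec.span {x, u}"
    using plines_span_insertE[OF ab(1) x(2,1) sub(1)] by blast
  obtain v where v: "v \<in> b" "v \<notin> X" "b = vec.span {x, v}"
    using plines_span_insertE[OF ab(2) x(2,1) sub(2)] by blast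
  let ?W = "vec.span {x, u, v}" and ?m = "vec.span {u, v}"
  have "join a b \<subseteq> ?W" using u v by (intro join_least) (auto intro!: vec.span_mono)
  hence "vec.dim (join a b) \<le> vec.dim ?W" by (rule vec.dim_subset)
  moreover have "x \<in> a" "x \<in> b" using x sub by (auto intro: vec.span_base)
  ultimately have dW: "vec.dim ?W \<ge> 3"
    using join_meeting_plines_in_pplanes[OF ab x(1)] by (simp add: pdim_set_def)
  have dm: "vec.dim ?m \<le> 2"
  proof -
    have "vec.dim ?m \<le> card {u, v}" by (rule vec.dim_le_card) auto
    also have "card {u, v} \<le> 2" by (simp add: card_insert_if)
    finally show ?thesis .
  qed
  have xm: "x \<notin> ?m"
  proof
    assume "x \<in> ?m"
    hence "?W = ?m" by (simp add: vec.span_redundant)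
    thus False using dW dm by simp
  qed
  hence "vec.dim ?m = 2" using vec.dim_insert[of x "{u, v}"] dW dm by simp
  moreover have "?m \<subseteq> join a b"
    using u(1) v(1) join_upper1[of a b] join_upper2[of b a] by (intro vec.span_minimal) auto
  moreover have "\<not> X \<subseteq> ?m" using xm x by (auto intro: vec.span_base)
  ultimately show thesis using that[of ?m] by (simp add: pdim_set_def)
qed

text \<open>Each line through \<open>X\<close> in the plane meets a fixed line \<open>m\<close> of the plane
  missing \<open>X\<close>, and is determined by that intersection point.\<close>

lemma card_plines_through_in_plane_le:
  fixes X a b :: "('a::{field,finite}^'m) set"
  assumes X: "X \<in> ppoints" and ab: "a \<in> plines" "b \<in> plines" "a \<noteq> b"
    and sub: "X \<subseteq> a" "X \<subseteq> b"
  shows "card {t \<in> plines. X \<subseteq> t \<and> t \<subseteq> join a b} \<le> CARD('a) + 1"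
proof -
  obtain m where m: "m \<in> plines" "m \<subseteq> join a b" "\<not> X \<subseteq> m"
    using exists_pline_avoiding_ppoint[OF assms] by blast
  have sm: "vec.subspace m" "vec.dim m = 2" using m by (auto simp: pdim_set_def)
  obtain x where "x \<noteq> 0" "X = vec.span {x}" using ppointsE[OF X] by blast
  hence "x \<in> a" "x \<in> b" "x \<noteq> 0" using sub by (auto intro: vec.span_base)
  hence plane: "vec.dim (join a b) = 3"
    using join_meeting_plines_in_pplanes[OF ab] by (simp add: pdim_set_def)
  have "{t \<in> plines. X \<subseteq> t \<and> t \<subseteq> join a b} \<subseteq> join X ` {Y \<in> ppoints. Y \<subseteq> m}"
  proof
    fix t assume t: "t \<in> {t \<in> plines. X \<subseteq> t \<and> t \<subseteq> join a b}"
    hence st: "vec.subspace t" "vec.dim t = 2" by (auto simp: pdim_set_def)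
    have "t \<subseteq> join a b" "vec.dim (join a b) < vec.dim t + vec.dim m" using t plane st sm by auto
    then obtain w where w: "w \<in> t" "w \<in> m" "w \<noteq> 0"
      using subspaces_meet_if_dim_gt[OF st(1) sm(1) vec.subspace_span _ m(2)] by blast
    let ?Y = "vec.span {w}"
    have Ypt: "?Y \<in> ppoints" using span_singleton_in_ppoints[OF w(3)] .
    have Ym: "?Y \<subseteq> m" and Yt: "?Y \<subseteq> t" using w st sm by (simp_all add: vec.span_minimal)
    hence "t = join X ?Y" using plines_eq_join_ppoints[OF X Ypt _ _ _ Yt] t m(3) by auto
    thus "t \<in> join X ` {Y \<in> ppoints. Y \<subseteq> m}" using Ypt Ym by blast
  qed
  hence "card {t \<in> plines. X \<subseteq> t \<and> t \<subseteq> join a b} \<le> card (join X ` {Y \<in> ppoints. Y \<subseteq> m})"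
    by (intro card_mono) auto
  also have "\<dots> \<le> card {Y \<in> ppoints. Y \<subseteq> m}" by (rule card_image_le) simp
  also have "\<dots> \<le> CARD('a) + 1" by (rule card_ppoints_on_line_le[OF m(1)])
  finally show ?thesis .
qed

lemma pplanes_Int_plines_unique:
  fixes E F a t :: "('a::{field,finite}^'m) set"
  assumes "E \<in> pplanes" "F \<in> pplanes" "E \<noteq> F" "a \<in> plines" "t \<in> plines"
    "a \<subseteq> E" "a \<subseteq> F" "t \<subseteq> E" "t \<subseteq> F"
  shows "t = a"
proof -
  have sE: "vec.subspace E" "vec.dim E = 3" and sF: "vec.subspace F" "vec.dim F = 3"
    using assms by (auto simp: pdim_set_def)
  have sI: "vec.subspace (E \<inter> F)" using sE sF by (simp add: vec.subspace_inter)
  have "E \<inter> F \<noteq> E"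
  proof
    assume "E \<inter> F = E" hence "E \<subseteq> F" by blast
    thus False using pdim_set_subset_eq[OF assms(1,2)] assms(3) by blast
  qed
  hence "vec.dim (E \<inter> F) < 3"
    using vec.subspace_dim_equal[OF sI sE(1)] sE by (metis Int_lower1 not_less)
  moreover have sa: "vec.subspace a" "vec.dim a = 2" and st: "vec.subspace t" "vec.dim t = 2"
    using assms by (auto simp: pdim_set_def)
  ultimately have "a = E \<inter> F" "t = E \<inter> F"
    using vec.subspace_dim_equal[OF sa(1) sI] vec.subspace_dim_equal[OF st(1) sI] assms by auto
  thus ?thesis by simp
qed

lemma join_pplanes_plines_in_psolids:
  fixes E c :: "('a::{field,finite}^'m) set"
  assumes "E \<in> pplanes" "c \<in> plines" "\<not> c \<subseteq> E" "v \<noteq> 0" "v \<in> E" "v \<in> c"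
  shows "join E c \<in> psolids"
proof -
  have sE: "vec.subspace E" "vec.dim E = 3" and sc: "vec.subspace c" "vec.dim c = 2"
    using assms by (auto simp: pdim_set_def)
  have sI: "vec.subspace (E \<inter> c)" using sE sc by (simp add: vec.subspace_inter)
  have "vec.dim (E \<inter> c) \<ge> 1" using dim_ge_1_if_nonzero[OF sI, of v] assms by auto
  moreover have "vec.dim (E \<inter> c) < 2"
  proof (rule ccontr)
    assume "\<not> ?thesis"
    hence "E \<inter> c = c" using vec.subspace_dim_equal[OF sI sc(1)] sc by auto
    thus False using assms(3) by blast
  qed
  ultimately have "vec.dim (E \<inter> c) = 1" by simp
  hence "vec.dim (join E c) = 4" using dim_join_plus_dim_Int[OF sE(1) sc(1)] sE sc by linarith
  thus ?thesis by (simp add: pdim_set_def)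
qed

lemma plines_not_subset_if_Int_ppoints:
  assumes "l \<in> plines" "l \<inter> M \<in> ppoints"
  shows "\<not> l \<subseteq> M"
  using assms by (auto simp: pdim_set_def Int_absorb2)

lemma Int_subset_if_pmeet:
  assumes "l \<inter> M \<in> ppoints" "s \<subseteq> M" "pmeet l s"
  shows "l \<inter> M \<subseteq> s"
proof -
  obtain R where R: "R \<in> ppoints" "R \<subseteq> l" "R \<subseteq> s" using assms(3)
    by (auto simp: pmeet_def)
  thus ?thesis using pdim_set_subset_eq[OF R(1) assms(1)] assms(2) by auto
qed

lemma card_Un3_ge:
  assumes "finite A" "finite B" "finite C"
    and "card (A \<inter> B) \<le> 1" "card (A \<inter> C) \<le> 1" "card (B \<inter> C) \<le> 1"
  shows "card A + card B + card C \<le> card (A \<union> B \<union> C) + 3"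
proof -
  have "card ((A \<union> B) \<inter> C) \<le> card (A \<inter> C) + card (B \<inter> C)"
    by (metis Int_Un_distrib2 card_Un_le)
  moreover have "card A + card B = card (A \<union> B) + card (A \<inter> B)"
    using assms(1,2) by (rule card_Un_Int)
  moreover have "card (A \<union> B) + card C = card (A \<union> B \<union> C) + card ((A \<union> B) \<inter> C)"
    using assms(1-3) by (intro card_Un_Int) auto
  ultimately show ?thesis using assms(4-6) by linarith
qed

lemma int_bound_of_counts:
  fixes c g \<alpha> q n :: nat
  assumes "c + q + (q - 1) * g \<le> n" "c \<le> g + Suc (\<alpha> * q)" "1 \<le> q"
  shows "int q * int c - int \<alpha> * int q^2 + int \<alpha> * int q + 1 \<le> int n"
proof -
  have "int (c + q + (q - 1) * g) \<le> int n" using assms(1) by (simp only: of_nat_le_iff)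
  hence total: "int c + int q + (int q - 1) * int g \<le> int n"
    using assms(3) by (simp add: of_nat_diff)
  have "int c \<le> int (g + Suc (\<alpha> * q))" using assms(2) by (simp only: of_nat_le_iff)
  hence "(int q - 1) * (int c - 1 - int \<alpha> * int q) \<le> (int q - 1) * int g"
    using assms(3) by (intro mult_left_mono) auto
  thus ?thesis using total by (simp add: algebra_simps power2_eq_square)
qed

lemma cubic_bound_le_alpha_bound:
  fixes \<alpha> q :: nat and c :: int
  assumes "\<alpha> \<le> q"
  shows "int q * c - int q^3 + int q^2 + 1 \<le> int q * c - int \<alpha> * int q^2 + int \<alpha> * int q + 1"
proof -
  have "int q \<le> int q^2" by (metis le_square of_nat_le_iff of_nat_mult power2_eq_square)
  hence "0 \<le> (int q - int \<alpha>) * (int q^2 - int q)" using assms by simp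
  thus ?thesis by (simp add: algebra_simps power2_eq_square power3_eq_cube)
qed

section \<open>Sets of lines satisfying (Pt), (Pl) and (Sd)\<close>

locale line_set =
  fixes L :: "('a::{field,finite}^'m) set set"
  assumes lines: "L \<subseteq> plines" and Pt: "cond_Pt L" and Pl: "cond_Pl L" and Sd: "cond_Sd L"
begin

lemma card_lines_through:
  assumes "X \<in> ppoints" "t \<in> L" "X \<subseteq> t"
  shows "card {c \<in> L. X \<subseteq> c} = CARD('a) + 1"
proof -
  have "card {c \<in> L. X \<subseteq> c} \<noteq> 0" using assms by (auto simp: card_eq_0_iff)
  thus ?thesis using Pt assms(1) by (auto simp: cond_Pt_def)
qed

lemma card_lines_in_plane:
  assumes "E \<in> pplanes" "a \<in> L" "b \<in> L" "a \<noteq> b" "a \<subseteq> E" "b \<subseteq> E"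
  shows "card (lines_in L E) = CARD('a) + 1"
proof -
  have "card {a, b} \<le> card (lines_in L E)"
    using assms by (intro card_mono) (auto simp: lines_in_def)
  thus ?thesis using Pl assms by (auto simp: cond_Pl_def)
qed

lemma card_lines_in_two_planes_le_1:
  assumes "E \<in> pplanes" "F \<in> pplanes" "E \<noteq> F"
  shows "card (lines_in L E \<inter> lines_in L F) \<le> 1"
proof -
  have "t = a" if "a \<in> lines_in L E \<inter> lines_in L F" "t \<in> lines_in L E \<inter> lines_in L F" for a t
    using that assms lines pplanes_Int_plines_unique[OF assms, of a t] by (auto simp: lines_in_def)
  thus ?thesis using card_le_Suc0_iff_eq[of "lines_in L E \<inter> lines_in L F"] by auto
qed

text \<open>Three non-coplanar lines of \<open>L\<close> through a point would span a solid containing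
  the lines of three planes with \<open>q + 1\<close> lines each, i.e. at least \<open>3 q\<close> lines, contradicting (Sd).\<close>

lemma concurrent_lines_coplanar:
  assumes X: "X \<in> ppoints" and abc: "a \<in> L" "b \<in> L" "c \<in> L"
    and through: "X \<subseteq> a" "X \<subseteq> b" "X \<subseteq> c" and ab: "a \<noteq> b"
  shows "c \<subseteq> join a b"
proof (rule ccontr)
  assume nc: "\<not> c \<subseteq> join a b"
  obtain x where x: "x \<noteq> 0" "X = vec.span {x}" using ppointsE[OF X] by blast
  have xin: "x \<in> a" "x \<in> b" "x \<in> c" using x through by (auto intro: vec.span_base)
  have pl: "a \<in> plines" "b \<in> plines" "c \<in> plines" using abc lines by auto
  have ca: "c \<noteq> a" and cb: "c \<noteq> b" using nc join_upper1[of a b] join_upper2[of b a]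
    by auto
  have planes: "join a b \<in> pplanes" "join a c \<in> pplanes" "join b c \<in> pplanes"
    using join_meeting_plines_in_pplanes pl ab ca cb x(1) xin by metis+
  let ?S = "join (join a b) c"
  have S: "?S \<in> psolids"
    using join_pplanes_plines_in_psolids[OF planes(1) pl(3) nc x(1) _ xin(3)] xin(1) join_upper1
    by blast
  have abS: "join a b \<subseteq> ?S" and cS: "c \<subseteq> ?S"
    by (rule join_upper1, rule join_upper2)
  hence "a \<subseteq> ?S" "b \<subseteq> ?S" using join_upper1[of a b] join_upper2[of b a] by auto
  hence in_S: "join a b \<subseteq> ?S" "join a c \<subseteq> ?S" "join b c \<subseteq> ?S"
    using abS cS by (metis join_least vec.subspace_span)+
  have ne1: "join a b \<noteq> join a c" "join a b \<noteq> join b c"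
    using nc join_upper2[of c a] join_upper2[of c b] by auto
  have ne2: "join a c \<noteq> join b c"
  proof
    assume "join a c = join b c"
    hence "join a b \<subseteq> join a c" using join_upper1[of b c] join_upper1[of a c]
      by (intro join_least) auto
    thus False using pdim_set_subset_eq[OF planes(1,2)] ne1 by simp
  qed
  let ?q = "CARD('a)"
  have "card (lines_in L (join a b)) + card (lines_in L (join a c)) + card (lines_in L (join b c))
      \<le> card (lines_in L (join a b) \<union> lines_in L (join a c) \<union> lines_in L (join b c)) + 3"
    using planes ne1 ne2 by (intro card_Un3_ge card_lines_in_two_planes_le_1) auto
  also have "\<dots> \<le> card (lines_in L ?S) + 3"
    using in_S by (intro add_right_mono card_mono) (auto simp: lines_in_def)
  also have "\<dots> \<le> 2 * ?q + 4" using Sd S by (auto simp: cond_Sd_def)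
  finally have "3 * (?q + 1) \<le> 2 * ?q + 4"
    using card_lines_in_plane[OF planes(1) abc(1,2) ab join_upper1 join_upper2]
      card_lines_in_plane[OF planes(2) abc(1,3) ca[symmetric] join_upper1 join_upper2]
      card_lines_in_plane[OF planes(3) abc(2,3) cb[symmetric] join_upper1 join_upper2]
    by simp
  thus False using card_field_ge_2[where 'a='a] by simp
qed

lemma lines_through_in_plane:
  assumes X: "X \<in> ppoints" and ab: "a \<in> L" "b \<in> L" "a \<noteq> b" "X \<subseteq> a" "X \<subseteq> b"
    and t: "t \<in> plines" "X \<subseteq> t" "t \<subseteq> join a b"
  shows "t \<in> L"
proof -
  let ?F = "{c \<in> L. X \<subseteq> c}"
  let ?G = "{t \<in> plines. X \<subseteq> t \<and> t \<subseteq> join a b}"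
  have FG: "?F \<subseteq> ?G" using concurrent_lines_coplanar[OF X ab(1,2) _ ab(4,5) _ ab(3)] lines
    by auto
  have "card ?G \<le> CARD('a) + 1"
    using card_plines_through_in_plane_le[OF X _ _ ab(3-5)] ab lines by auto
  also have "\<dots> = card ?F" using card_lines_through[OF X ab(1,4)] by simp
  finally have "?F = ?G" using FG by (intro card_seteq) auto
  thus ?thesis using t by auto
qed

lemma exists_transversal:
  assumes l: "l \<in> L" and t: "t \<in> L" "t \<noteq> l" "w \<in> l" "w \<in> t" "w \<noteq> 0"
    and s: "s \<in> L" "l \<inter> s \<subseteq> {0}" and ts: "t \<subseteq> join l s"
  shows "\<exists>u\<in>L. \<not> u \<inter> l \<subseteq> {0} \<and> \<not> u \<inter> s \<subseteq> {0}"
proof -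
  have sub: "vec.subspace l" "vec.subspace t" "vec.subspace s"
    and dim: "vec.dim l = 2" "vec.dim s = 2"
    using l t s lines by (auto simp: pdim_set_def)
  let ?Q = "vec.span {w}"
  have Qpt: "?Q \<in> ppoints" using span_singleton_in_ppoints[OF t(5)] .
  have Ql: "?Q \<subseteq> l" and Qt: "?Q \<subseteq> t" using t sub
    by (simp_all add: vec.span_minimal)
  have "join l t \<in> pplanes" using join_meeting_plines_in_pplanes[of l t w] l t lines by auto
  hence plane: "vec.subspace (join l t)" "vec.dim (join l t) = 3" by (auto simp: pdim_set_def)
  have "join l t \<subseteq> join l s" using ts join_upper1[of l s] by (intro join_least) auto
  moreover have "vec.dim (join l s) < vec.dim (join l t) + vec.dim s"
    using dim_join_skew[OF sub(1,3) s(2)] dim plane by simp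
  ultimately obtain x where x: "x \<in> join l t" "x \<in> s" "x \<noteq> 0"
    using subspaces_meet_if_dim_gt[OF plane(1) sub(3) vec.subspace_span _ join_upper2] by blast
  let ?X = "vec.span {x}"
  have Xpt: "?X \<in> ppoints" using span_singleton_in_ppoints[OF x(3)] .
  have Xs: "?X \<subseteq> s" using x sub by (simp add: vec.span_minimal)
  have QX: "?Q \<noteq> ?X"
  proof
    assume "?Q = ?X"
    hence "w \<in> s" using Xs vec.span_base[of w "{w}"] by auto
    thus False using t s by auto
  qed
  have "join ?Q ?X \<in> L"
  proof (rule lines_through_in_plane[OF Qpt l t(1) t(2)[symmetric] Ql Qt])
    show "join ?Q ?X \<in> plines" using join_ppoints_in_plines[OF Qpt Xpt QX] .
    show "join ?Q ?X \<subseteq> join l t"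
      using Ql join_upper1[of l t] x(1) by (intro join_least) (auto simp: vec.span_minimal)
  qed (rule join_upper1)
  moreover have "w \<in> join ?Q ?X" "x \<in> join ?Q ?X"
    using join_upper1[of ?Q ?X] join_upper2[of ?X ?Q] vec.span_base[of w "{w}"]
      vec.span_base[of x "{x}"]
    by auto
  ultimately show ?thesis using t x by blast
qed

section \<open>Lines skew to \<open>l\<close> forced by an isolated line\<close>

definition skew_lines_off :: "('a^'m) set \<Rightarrow> ('a^'m) set \<Rightarrow> ('a^'m) set \<Rightarrow> ('a^'m) set set" where
  "skew_lines_off M l s = {t \<in> L. t \<subseteq> join l s \<and> l \<inter> t \<subseteq> {0} \<and> \<not> t \<subseteq> M}"

definition isolated_line :: "('a^'m) set \<Rightarrow> ('a^'m) set \<Rightarrow> ('a^'m) set \<Rightarrow> bool" where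
  "isolated_line M l s \<longleftrightarrow> s \<in> lines_in L M \<and> l \<inter> s \<subseteq> {0}
     \<and> (\<forall>t\<in>L. t \<subseteq> join (l \<inter> M) s \<longrightarrow> t = s)"

lemma transversal_meets_outside:
  assumes M: "vec.subspace M" and l: "l \<in> L" and P: "l \<inter> M \<in> ppoints"
    and iso: "isolated_line M l s" and u: "u \<in> L" "q \<in> u" "q \<in> l" "q \<noteq> 0" "\<not> u \<inter> s \<subseteq> {0}"
  shows "q \<notin> M"
proof
  assume "q \<in> M"
  have s: "s \<in> L" "l \<inter> s \<subseteq> {0}" using iso by (auto simp: isolated_line_def lines_in_def)
  obtain x where x: "x \<noteq> 0" "x \<in> u" "x \<in> s" using u by auto
  let ?Q = "vec.span {q}" and ?X = "vec.span {x}"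
  have sub: "vec.subspace l" "vec.subspace s" "vec.subspace u"
    using l u s lines by (auto simp: pdim_set_def)
  have Qpt: "?Q \<in> ppoints" and Xpt: "?X \<in> ppoints"
    using u x by (simp_all add: span_singleton_in_ppoints)
  have Qu: "?Q \<subseteq> u" and Xu: "?X \<subseteq> u" and Xs: "?X \<subseteq> s"
    using u x sub by (simp_all add: vec.span_minimal)
  have "?Q \<subseteq> l \<inter> M" using u \<open>q \<in> M\<close> sub M by (simp add: vec.span_minimal vec.subspace_inter)
  hence QP: "?Q = l \<inter> M" using pdim_set_subset_eq[OF Qpt P] by simp
  have "?Q \<noteq> ?X" using Xs u s(2) vec.span_base[of q "{q}"] by auto
  hence "u = join (l \<inter> M) ?X" using plines_eq_join_ppoints[OF Qpt Xpt _ _ Qu Xu] u lines QP by auto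
  also have "\<dots> \<subseteq> join (l \<inter> M) s"
    using join_upper1[of "l \<inter> M" s] Xs join_upper2[of s "l \<inter> M"] by (intro join_least) auto
  finally have "u \<subseteq> join (l \<inter> M) s" .
  hence "u = s" using iso u by (auto simp: isolated_line_def)
  thus False using u s(2) by auto
qed

lemma pencil_line_in_skew_lines_off:
  assumes M: "vec.subspace M" and l: "l \<in> L" and s: "s \<in> L" "s \<subseteq> M" "l \<inter> s \<subseteq> {0}"
    and q: "q \<in> l" "q \<notin> M" and u: "u \<in> L" "q \<in> u" "u \<subseteq> vec.span (insert q s)"
    and X: "X \<in> ppoints" "X \<subseteq> u" "X \<subseteq> s" and t: "t \<in> L" "X \<subseteq> t" "t \<noteq> s" "t \<noteq> u"
  shows "t \<in> skew_lines_off M l s"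
proof -
  let ?Q = "vec.span {q}" and ?Pi = "vec.span (insert q s)"
  have line: "\<And>t. t \<in> L \<Longrightarrow> vec.subspace t" using lines by (auto simp: pdim_set_def)
  have "s \<noteq> u" using u(2) q(2) s(2) by auto
  hence "t \<subseteq> join s u" by (rule concurrent_lines_coplanar[OF X(1) s(1) u(1) t(1) X(3,2) t(2)])
  also have "join s u \<subseteq> ?Pi" using u(3) by (intro join_least) (auto intro: vec.span_base)
  finally have t_Pi: "t \<subseteq> ?Pi" .
  have "q \<notin> t"
  proof
    assume "q \<in> t"
    have "q \<noteq> 0" using q(2) M vec.subspace_0 by auto
    hence Qpt: "?Q \<in> ppoints" by (rule span_singleton_in_ppoints)
    have "?Q \<noteq> X" using X(3) q(2) s(2) vec.span_base[of q "{q}"] by auto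
    moreover have "?Q \<subseteq> t" "?Q \<subseteq> u" using \<open>q \<in> t\<close> u(2) line t(1) u(1)
      by (simp_all add: vec.span_minimal)
    ultimately have "t = join ?Q X" "u = join ?Q X"
      using plines_eq_join_ppoints[OF Qpt X(1)] X t u lines by auto
    thus False using t(4) by simp
  qed
  hence "l \<inter> t \<subseteq> {0}" using skew_if_subset_span_insert[of l s t q] line l t(1) s q t_Pi by blast
  moreover have "\<not> t \<subseteq> M"
  proof
    assume "t \<subseteq> M"
    hence "t \<subseteq> s" using t_Pi span_insert_Int_subspace[OF M line[OF s(1)] s(2) q(2)] by auto
    thus False using pdim_set_subset_eq t s lines by blast
  qed
  moreover have "?Pi \<subseteq> join l s"
    using q join_upper1[of l s] join_upper2[of s l] by (intro vec.span_minimal) auto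
  ultimately show ?thesis using t t_Pi by (auto simp: skew_lines_off_def)
qed

text \<open>A transversal \<open>u\<close> of \<open>l\<close> and \<open>s\<close> spans with \<open>s\<close> a plane meeting \<open>l\<close>
  only in the point \<open>u \<inter> l\<close> and \<open>M\<close> only in \<open>s\<close>; the other \<open>q - 1\<close> lines of \<open>L\<close>
  through \<open>u \<inter> s\<close> lie in this plane.\<close>

lemma card_skew_lines_off_ge_with_transversal:
  assumes M: "vec.subspace M" and l: "l \<in> L" and P: "l \<inter> M \<in> ppoints"
    and iso: "isolated_line M l s" and u: "u \<in> L" "\<not> u \<inter> l \<subseteq> {0}" "\<not> u \<inter> s \<subseteq> {0}"
  shows "CARD('a) - 1 \<le> card (skew_lines_off M l s)"
proof -
  have s: "s \<in> L" "s \<subseteq> M" "l \<inter> s \<subseteq> {0}"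
    using iso by (auto simp: isolated_line_def lines_in_def)
  obtain q where q: "q \<in> u" "q \<in> l" "q \<noteq> 0" using u by auto
  obtain x where x: "x \<noteq> 0" "x \<in> u" "x \<in> s" using u by auto
  have qM: "q \<notin> M" using transversal_meets_outside[OF M l P iso u(1) q u(3)] .
  let ?Q = "vec.span {q}" and ?X = "vec.span {x}"
  have Qpt: "?Q \<in> ppoints" and Xpt: "?X \<in> ppoints"
    using q x by (simp_all add: span_singleton_in_ppoints)
  have sub: "vec.subspace u" "vec.subspace s" using u s lines by (auto simp: pdim_set_def)
  have Qu: "?Q \<subseteq> u" and Xu: "?X \<subseteq> u" and Xs: "?X \<subseteq> s"
    using q x sub by (simp_all add: vec.span_minimal)
  have "?Q \<noteq> ?X" using Xs q qM s(2) vec.span_base[of q "{q}"] by auto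
  hence "u = join ?Q ?X" using plines_eq_join_ppoints[OF Qpt Xpt _ _ Qu Xu] u lines by auto
  also have "\<dots> \<subseteq> vec.span (insert q s)"
    using Xs vec.span_mono[of "{q}" "insert q s"] by (intro join_least) (auto intro: vec.span_base)
  finally have u_Pi: "u \<subseteq> vec.span (insert q s)" .
  have su: "s \<noteq> u" using q qM s by auto
  let ?F = "{c \<in> L. ?X \<subseteq> c}"
  have "?F - {s, u} \<subseteq> skew_lines_off M l s"
    using pencil_line_in_skew_lines_off[OF M l s q(2) qM u(1) q(1) u_Pi Xpt Xu Xs] by auto
  hence "card (?F - {s, u}) \<le> card (skew_lines_off M l s)" by (intro card_mono) auto
  moreover have "card (?F - {s, u}) = CARD('a) - 1"
    using card_lines_through[OF Xpt s(1) Xs] s u Xs Xu su by (simp add: card_Diff_subset)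
  ultimately show ?thesis by simp
qed

lemma card_skew_lines_off_ge_without_transversal:
  assumes M: "vec.subspace M" and l: "l \<in> L" and iso: "isolated_line M l s"
    and no_transversal: "\<forall>u\<in>L. u \<inter> l \<subseteq> {0} \<or> u \<inter> s \<subseteq> {0}"
  shows "CARD('a) - 1 \<le> card (skew_lines_off M l s)"
proof -
  have s: "s \<in> L" "s \<subseteq> M" "l \<inter> s \<subseteq> {0}" using iso
    by (auto simp: isolated_line_def lines_in_def)
  have sub: "vec.subspace l" "vec.subspace s" and dim: "vec.dim l = 2" "vec.dim s = 2"
    using l s lines by (auto simp: pdim_set_def)
  let ?S = "join l s"
  have S: "?S \<in> psolids" using dim_join_skew[OF sub s(3)] dim by (simp add: pdim_set_def)
  have ls: "l \<noteq> s" using s(3) dim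
    by (metis Int_absorb dim_eq_0 vec.dim_eq_0 zero_neq_numeral)
  have in_S: "l \<in> lines_in L ?S" "s \<in> lines_in L ?S"
    using l s join_upper1[of l s] join_upper2[of s l] by (auto simp: lines_in_def)
  have "card {l, s} \<le> card (lines_in L ?S)" using in_S by (intro card_mono) auto
  hence "CARD('a) + 1 \<le> card (lines_in L ?S)" using Sd S ls by (auto simp: cond_Sd_def)
  hence card_rest: "CARD('a) - 1 \<le> card (lines_in L ?S - {l, s})"
    using in_S ls by (simp add: card_Diff_subset)
  have "lines_in L ?S - {l, s} \<subseteq> skew_lines_off M l s"
  proof
    fix t assume "t \<in> lines_in L ?S - {l, s}"
    hence t: "t \<in> L" "t \<subseteq> ?S" "t \<noteq> l" "t \<noteq> s"
      by (auto simp: lines_in_def)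
    have "l \<inter> t \<subseteq> {0}"
      using exists_transversal[OF l t(1,3) _ _ _ s(1,3) t(2)] no_transversal by blast
    moreover have "\<not> t \<subseteq> M"
    proof
      assume "t \<subseteq> M"
      hence "t \<subseteq> M \<inter> ?S" using t by auto
      also have "\<dots> \<subseteq> join (l \<inter> M) s"
        using Int_join_subset_join_Int[OF M sub s(2)] .
      finally show False using iso t by (auto simp: isolated_line_def)
    qed
    ultimately show "t \<in> skew_lines_off M l s" using t by (auto simp: skew_lines_off_def)
  qed
  hence "card (lines_in L ?S - {l, s}) \<le> card (skew_lines_off M l s)" by (intro card_mono) auto
  thus ?thesis using card_rest by simp
qed

lemma card_skew_lines_off_ge:
  assumes "vec.subspace M" "l \<in> L" "l \<inter> M \<in> ppoints" "isolated_line M l s"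
  shows "CARD('a) - 1 \<le> card (skew_lines_off M l s)"
proof (cases "\<forall>u\<in>L. u \<inter> l \<subseteq> {0} \<or> u \<inter> s \<subseteq> {0}")
  case True
  thus ?thesis using card_skew_lines_off_ge_without_transversal assms by blast
next
  case False
  thus ?thesis using card_skew_lines_off_ge_with_transversal assms by blast
qed

lemma skew_lines_off_disjoint:
  assumes M: "vec.subspace M" and l: "l \<in> L"
    and iso: "isolated_line M l s1" "isolated_line M l s2" and ne: "s1 \<noteq> s2"
  shows "skew_lines_off M l s1 \<inter> skew_lines_off M l s2 = {}"
proof (rule ccontr)
  assume "skew_lines_off M l s1 \<inter> skew_lines_off M l s2 \<noteq> {}"
  then obtain t where t: "t \<in> L" "t \<subseteq> join l s1" "t \<subseteq> join l s2" "l \<inter> t \<subseteq> {0}"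
    by (auto simp: skew_lines_off_def)
  have s: "s1 \<in> L" "s1 \<subseteq> M" "l \<inter> s1 \<subseteq> {0}" "s2 \<in> L" "s2 \<subseteq> M" "l \<inter> s2 \<subseteq> {0}"
    using iso by (auto simp: isolated_line_def lines_in_def)
  have line: "\<And>x. x \<in> L \<Longrightarrow> vec.subspace x \<and> vec.dim x = 2"
    using lines by (auto simp: pdim_set_def)
  have dim4: "vec.dim (join l x) = 4" if "x \<in> L" "l \<inter> x \<subseteq> {0}" for x
    using dim_join_skew[of l x] line[OF l] line[OF that(1)] that(2) by simp
  have "join l t \<subseteq> join l s1" "join l t \<subseteq> join l s2"
    using t join_upper1 by (metis join_least vec.subspace_span)+
  hence "join l t = join l s1" "join l t = join l s2"
    using vec.subspace_dim_equal dim4 t(1,4) s by (metis order_refl vec.subspace_span)+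
  hence "s2 \<subseteq> M \<inter> join l s1" using join_upper2[of s2 l] s(5) by auto
  also have "\<dots> \<subseteq> join (l \<inter> M) s1"
    using Int_join_subset_join_Int[OF M] line[OF l] line[OF s(1)] s(2) by blast
  finally show False using iso s(4) ne by (auto simp: isolated_line_def)
qed

lemma card_UN_skew_lines_off_ge:
  assumes "vec.subspace M" "l \<in> L" "l \<inter> M \<in> ppoints" "\<forall>s\<in>G. isolated_line M l s"
  shows "(CARD('a) - 1) * card G \<le> card (\<Union>s\<in>G. skew_lines_off M l s)"
proof -
  have "card (\<Union>s\<in>G. skew_lines_off M l s) = (\<Sum>s\<in>G. card (skew_lines_off M l s))"
    using skew_lines_off_disjoint assms by (intro card_UN_disjoint) auto
  moreover have "card G * (CARD('a) - 1) \<le> (\<Sum>s\<in>G. card (skew_lines_off M l s))"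
    using sum_bounded_below[of G "CARD('a) - 1" "\<lambda>s. card (skew_lines_off M l s)"]
      card_skew_lines_off_ge assms by auto
  ultimately show ?thesis by (simp add: mult.commute)
qed

lemma exists_line_through_meeting:
  assumes M: "vec.subspace M" and P: "P \<in> ppoints" "P \<subseteq> M"
    and s: "s \<in> L" "s \<subseteq> M" "P \<inter> s \<subseteq> {0}"
    and t: "t \<in> L" "t \<subseteq> join P s" "t \<noteq> s"
  shows "\<exists>v\<in>lines_in L M. P \<subseteq> v \<and> \<not> v \<inter> s \<subseteq> {0}"
proof -
  have sP: "vec.subspace P" "vec.dim P = 1" using P by (auto simp: pdim_set_def)
  have ss: "vec.subspace s" "vec.dim s = 2" and st: "vec.subspace t" "vec.dim t = 2"
    using lines s t by (auto simp: pdim_set_def)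
  have plane: "join P s \<in> pplanes"
    using dim_join_skew[OF sP(1) ss(1) s(3)] sP ss by (simp add: pdim_set_def)
  have ts_Ps: "join t s \<subseteq> join P s" using t(2) join_upper2[of s P] by (intro join_least) auto
  have "vec.dim (join P s) < vec.dim t + vec.dim s" using plane st ss by (simp add: pdim_set_def)
  then obtain x where x: "x \<in> t" "x \<in> s" "x \<noteq> 0"
    using subspaces_meet_if_dim_gt[OF st(1) ss(1) vec.subspace_span t(2) join_upper2] by blast
  have "join t s \<in> pplanes" using join_meeting_plines_in_pplanes[of t s x] lines t s x by auto
  hence ts_eq: "join t s = join P s" using pdim_set_subset_eq[OF _ plane ts_Ps] by blast
  let ?X = "vec.span {x}"
  have Xpt: "?X \<in> ppoints" using span_singleton_in_ppoints[OF x(3)] .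
  have Xs: "?X \<subseteq> s" "?X \<subseteq> t" using x ss st by (auto simp: vec.span_minimal)
  have PX: "P \<noteq> ?X"
  proof
    assume "P = ?X"
    hence "x \<in> P" using vec.span_base[of x "{x}"] by auto
    thus False using x s(3) by auto
  qed
  have PX_Ps: "join P ?X \<subseteq> join P s"
    using join_upper1[of P s] Xs(1) join_upper2[of s P] by (intro join_least) auto
  have "join P ?X \<in> L"
    using lines_through_in_plane[OF Xpt t(1) s(1) t(3) Xs(2,1)
        join_ppoints_in_plines[OF P(1) Xpt PX] join_upper2] PX_Ps ts_eq
    by simp
  moreover have "join P s \<subseteq> M" using M P(2) s(2) by (intro join_least) auto
  moreover have "x \<in> join P ?X" using join_upper2[of ?X P] vec.span_base[of x "{x}"] by auto
  ultimately show ?thesis using PX_Ps x join_upper1[of P ?X] by (auto simp: lines_in_def)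
qed

section \<open>Counting the lines of \<open>L\<close>\<close>

lemma card_lines_through_in_subspace_le_1:
  assumes M: "vec.subspace M" and X: "X \<in> ppoints" and l: "l \<in> L" "X \<subseteq> l" "\<not> l \<subseteq> M"
  shows "card {t \<in> lines_in L M. X \<subseteq> t} \<le> 1"
proof -
  have "a = b" if "a \<in> lines_in L M" "X \<subseteq> a" "b \<in> lines_in L M" "X \<subseteq> b" for a b
  proof (rule ccontr)
    assume "a \<noteq> b"
    hence "l \<subseteq> join a b"
      using concurrent_lines_coplanar[OF X _ _ l(1) _ _ l(2)] that by (auto simp: lines_in_def)
    also have "join a b \<subseteq> M" using M that by (intro join_least) (auto simp: lines_in_def)
    finally show False using l(3) by simp
  qed
  thus ?thesis using card_le_Suc0_iff_eq[of "{t \<in> lines_in L M. X \<subseteq> t}"] by auto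
qed

lemma card_lines_ge_isolated:
  assumes M: "vec.subspace M" and l: "l \<in> L" and P: "l \<inter> M \<in> ppoints"
    and G: "\<forall>s\<in>G. isolated_line M l s"
  shows "card (lines_in L M) + CARD('a) + (CARD('a) - 1) * card G \<le> card L"
proof -
  let ?P = "l \<inter> M"
  have lM: "\<not> l \<subseteq> M" using plines_not_subset_if_Int_ppoints[OF _ P] l lines by auto
  obtain p where p: "p \<in> ?P" "p \<noteq> 0" using P exists_nonzero_if_dim_ge_1[of ?P]
    by (auto simp: pdim_set_def)
  define E where "E = {t \<in> L. ?P \<subseteq> t \<and> \<not> t \<subseteq> M}"
  define U where "U = (\<Union>s\<in>G. skew_lines_off M l s)"
  have "card {t \<in> L. ?P \<subseteq> t} \<le> card (E \<union> {t \<in> lines_in L M. ?P \<subseteq> t})"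
    by (rule card_mono) (auto simp: E_def lines_in_def)
  also have "\<dots> \<le> card E + card {t \<in> lines_in L M. ?P \<subseteq> t}"
    by (rule card_Un_le)
  finally have "card {t \<in> L. ?P \<subseteq> t} \<le> card E + card {t \<in> lines_in L M. ?P \<subseteq> t}" .
  hence card_E: "CARD('a) \<le> card E"
    using card_lines_through[OF P l] card_lines_through_in_subspace_le_1[OF M P l _ lM] by auto
  have card_U: "(CARD('a) - 1) * card G \<le> card U"
    unfolding U_def using card_UN_skew_lines_off_ge[OF M l P G] .
  have "lines_in L M \<inter> E = {}" "(lines_in L M \<union> E) \<inter> U = {}"
    using p by (auto simp: lines_in_def E_def U_def skew_lines_off_def)
  hence "card (lines_in L M \<union> E \<union> U) = card (lines_in L M) + card E + card U"
    by (simp add: card_Un_disjoint)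
  moreover have "card (lines_in L M \<union> E \<union> U) \<le> card L"
    by (rule card_mono) (auto simp: lines_in_def E_def U_def skew_lines_off_def)
  ultimately have "card (lines_in L M) + card E + card U \<le> card L" by simp
  thus ?thesis using card_E card_U by linarith
qed

lemma qM_points_if_on_two_lines:
  assumes M: "vec.subspace M" and Y: "Y \<in> ppoints"
    and s: "s \<in> lines_in L M" "s' \<in> lines_in L M" "s \<noteq> s'" "Y \<subseteq> s" "Y \<subseteq> s'"
  shows "Y \<in> qM_points L M"
proof -
  have sL: "s \<in> L" "s' \<in> L" "s \<subseteq> M" "s' \<subseteq> M" using s by (auto simp: lines_in_def)
  have "t \<in> lines_in L M" if t: "t \<in> L" "Y \<subseteq> t" for t
  proof -
    have "t \<subseteq> join s s'" using concurrent_lines_coplanar[OF Y sL(1,2) t(1) s(4,5) t(2) s(3)] .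
    also have "join s s' \<subseteq> M" using M sL by (intro join_least) auto
    finally show ?thesis using t by (auto simp: lines_in_def)
  qed
  hence "{t \<in> lines_in L M. Y \<subseteq> t} = {t \<in> L. Y \<subseteq> t}" by (auto simp: lines_in_def)
  thus ?thesis using card_lines_through[OF Y sL(1) s(4)] Y by (simp add: qM_points_def)
qed

lemma card_lines_meeting_le:
  assumes M: "vec.subspace M" and s: "s \<in> lines_in L M"
  shows "card {s' \<in> lines_in L M. \<not> s \<inter> s' \<subseteq> {0}}
    \<le> Suc (card {Y \<in> qM_points L M. Y \<subseteq> s} * CARD('a))"
proof -
  let ?Qs = "{Y \<in> qM_points L M. Y \<subseteq> s}"
  let ?through = "\<lambda>Y. {t \<in> lines_in L M. Y \<subseteq> t} - {s}"
  have meeting: "{s' \<in> lines_in L M. \<not> s \<inter> s' \<subseteq> {0}} \<subseteq> insert s (\<Union>Y\<in>?Qs. ?through Y)"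
  proof
    fix s' assume "s' \<in> {s' \<in> lines_in L M. \<not> s \<inter> s' \<subseteq> {0}}"
    hence s': "s' \<in> lines_in L M" "\<not> s \<inter> s' \<subseteq> {0}" by auto
    show "s' \<in> insert s (\<Union>Y\<in>?Qs. ?through Y)"
    proof (cases "s' = s")
      case False
      obtain x where x: "x \<in> s" "x \<in> s'" "x \<noteq> 0" using s'(2) by auto
      let ?Y = "vec.span {x}"
      have Ypt: "?Y \<in> ppoints" using span_singleton_in_ppoints[OF x(3)] .
      have "vec.subspace s" "vec.subspace s'"
        using s s' lines by (auto simp: lines_in_def pdim_set_def)
      hence Ys: "?Y \<subseteq> s" "?Y \<subseteq> s'" using x by (simp_all add: vec.span_minimal)
      hence "?Y \<in> ?Qs" using qM_points_if_on_two_lines[OF M Ypt s s'(1)] False by auto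
      moreover have "s' \<in> ?through ?Y" using s' Ys False by auto
      ultimately show ?thesis by blast
    qed simp
  qed
  have "card (?through Y) = CARD('a)" if "Y \<in> ?Qs" for Y
    using that s by (simp add: qM_points_def)
  hence "card (\<Union>Y\<in>?Qs. ?through Y) \<le> card ?Qs * CARD('a)"
    using card_UN_le[of ?Qs ?through] by simp
  moreover have "card {s' \<in> lines_in L M. \<not> s \<inter> s' \<subseteq> {0}}
      \<le> card (insert s (\<Union>Y\<in>?Qs. ?through Y))"
    using meeting by (rule card_mono[rotated]) simp
  moreover have "card (insert s (\<Union>Y\<in>?Qs. ?through Y)) \<le> Suc (card (\<Union>Y\<in>?Qs. ?through Y))"
    by (subst card_insert_if) auto
  ultimately show ?thesis by linarith
qed

lemma card_qM_points_on_line_le: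
  assumes M: "vec.subspace M" and P: "P \<in> ppoints" and l: "l \<in> L" "P \<subseteq> l" "\<not> l \<subseteq> M"
    and s: "s \<in> L" "P \<subseteq> s"
  shows "card {Y \<in> qM_points L M. Y \<subseteq> s} \<le> CARD('a)"
proof -
  have "{t \<in> lines_in L M. P \<subseteq> t} \<subseteq> {t \<in> L. P \<subseteq> t} - {l}"
    using l by (auto simp: lines_in_def)
  hence "card {t \<in> lines_in L M. P \<subseteq> t} \<le> card ({t \<in> L. P \<subseteq> t} - {l})" by (intro card_mono) auto
  also have "\<dots> = CARD('a)" using card_lines_through[OF P l(1,2)] l by simp
  finally have "P \<notin> qM_points L M" by (auto simp: qM_points_def)
  hence "{Y \<in> qM_points L M. Y \<subseteq> s} \<subseteq> {Y \<in> ppoints. Y \<subseteq> s} - {P}" by (auto simp: qM_points_def)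
  hence "card {Y \<in> qM_points L M. Y \<subseteq> s} \<le> card ({Y \<in> ppoints. Y \<subseteq> s} - {P})"
    by (intro card_mono) auto
  also have "\<dots> = card {Y \<in> ppoints. Y \<subseteq> s} - 1" using P s by simp
  also have "\<dots> \<le> CARD('a)" using card_ppoints_on_line_le[of s] s lines by auto
  finally show ?thesis .
qed

lemma isolated_line_if_no_meeting:
  assumes M: "vec.subspace M" and l: "l \<in> L" and P: "l \<inter> M \<in> ppoints"
    and no_meeting: "\<not> (\<exists>s\<in>lines_in L M. pmeet l s)" and s: "s \<in> lines_in L M"
  shows "isolated_line M l s"
proof -
  have sL: "s \<in> L" "s \<subseteq> M" using s by (auto simp: lines_in_def)
  have ls: "l \<inter> s \<subseteq> {0}"
    using no_meeting s pmeet_iff[of l s] l sL lines by (auto simp: pdim_set_def)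
  have "t = s" if t: "t \<in> L" "t \<subseteq> join (l \<inter> M) s" for t
  proof (rule ccontr)
    assume "t \<noteq> s"
    then obtain v where "v \<in> lines_in L M" "l \<inter> M \<subseteq> v"
      using exists_line_through_meeting[OF M P _ sL _ t] ls by blast
    moreover have "pmeet l v" using P \<open>l \<inter> M \<subseteq> v\<close> by (auto simp: pmeet_def)
    ultimately show False using no_meeting by blast
  qed
  thus ?thesis using s ls by (auto simp: isolated_line_def)
qed

lemma card_lines_ge_if_no_meeting:
  assumes M: "vec.subspace M" and l: "l \<in> L" and P: "l \<inter> M \<in> ppoints"
    and no_meeting: "\<not> (\<exists>s\<in>lines_in L M. pmeet l s)"
  shows "CARD('a) * card (lines_in L M) + 1 \<le> card L"
proof -
  have "card (lines_in L M) + CARD('a) + (CARD('a) - 1) * card (lines_in L M) \<le> card L"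
    using card_lines_ge_isolated[OF M l P] isolated_line_if_no_meeting[OF M l P no_meeting]
    by blast
  moreover have "CARD('a) * card (lines_in L M)
      = card (lines_in L M) + (CARD('a) - 1) * card (lines_in L M)"
    using card_field_ge_2[where 'a='a] by (cases "CARD('a)") auto
  ultimately show ?thesis using card_field_ge_2[where 'a='a] by linarith
qed

lemma isolated_line_if_skew_to_meeting_line:
  assumes M: "vec.subspace M" and l: "l \<in> L" and P: "l \<inter> M \<in> ppoints"
    and s: "s \<in> lines_in L M" "pmeet l s" and s': "s' \<in> lines_in L M" "s \<inter> s' \<subseteq> {0}"
  shows "isolated_line M l s'"
proof -
  let ?P = "l \<inter> M"
  have Ps: "?P \<subseteq> s" using Int_subset_if_pmeet[OF P _ s(2)] s by (auto simp: lines_in_def)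
  have s'L: "s' \<in> L" "s' \<subseteq> M" using s' by (auto simp: lines_in_def)
  have ls': "l \<inter> s' \<subseteq> {0}" using s'(2) Ps s'L by auto
  have "t = s'" if t: "t \<in> L" "t \<subseteq> join ?P s'" for t
  proof (rule ccontr)
    assume "t \<noteq> s'"
    then obtain v where v: "v \<in> lines_in L M" "?P \<subseteq> v" "\<not> v \<inter> s' \<subseteq> {0}"
      using exists_line_through_meeting[OF M P _ s'L _ t] ls' by blast
    have "card {t \<in> lines_in L M. ?P \<subseteq> t} \<le> 1"
      using card_lines_through_in_subspace_le_1[OF M P l]
        plines_not_subset_if_Int_ppoints[OF _ P] l lines by blast
    hence "v = s" using v s Ps card_le_Suc0_iff_eq[of "{t \<in> lines_in L M. ?P \<subseteq> t}"] by auto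
    thus False using v s'(2) by auto
  qed
  thus ?thesis using s' ls' by (auto simp: isolated_line_def)
qed

lemma card_lines_ge_if_meeting:
  assumes M: "vec.subspace M" and l: "l \<in> L" and P: "l \<inter> M \<in> ppoints"
    and s: "s \<in> lines_in L M" "pmeet l s" and \<alpha>: "card {Y \<in> qM_points L M. Y \<subseteq> s} = \<alpha>"
  shows "int CARD('a) * int (card (lines_in L M)) - int \<alpha> * int CARD('a)^2
      + int \<alpha> * int CARD('a) + 1 \<le> int (card L)"
    and "\<alpha> \<le> CARD('a)"
proof -
  define G where "G = {s' \<in> lines_in L M. s \<inter> s' \<subseteq> {0}}"
  have "\<forall>s'\<in>G. isolated_line M l s'"
    using isolated_line_if_skew_to_meeting_line[OF M l P s] by (auto simp: G_def)
  hence "card (lines_in L M) + CARD('a) + (CARD('a) - 1) * card G \<le> card L"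
    by (rule card_lines_ge_isolated[OF M l P])
  moreover have "card (lines_in L M) \<le> card G + card {s' \<in> lines_in L M. \<not> s \<inter> s' \<subseteq> {0}}"
    unfolding G_def by (rule order_trans[OF card_mono card_Un_le]) auto
  hence "card (lines_in L M) \<le> card G + Suc (\<alpha> * CARD('a))"
    using card_lines_meeting_le[OF M s(1)] unfolding \<alpha> by linarith
  ultimately show "int CARD('a) * int (card (lines_in L M)) - int \<alpha> * int CARD('a)^2
      + int \<alpha> * int CARD('a) + 1 \<le> int (card L)"
    using int_bound_of_counts card_field_ge_2[where 'a='a] by simp
  have "\<not> l \<subseteq> M" using plines_not_subset_if_Int_ppoints[OF _ P] l lines by auto
  moreover have "s \<in> L" "l \<inter> M \<subseteq> s" using s Int_subset_if_pmeet[OF P] by (auto simp: lines_in_def)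
  ultimately have "card {Y \<in> qM_points L M. Y \<subseteq> s} \<le> CARD('a)"
    by (rule card_qM_points_on_line_le[OF M P l Int_lower1])
  thus "\<alpha> \<le> CARD('a)" unfolding \<alpha> .
qed

end

theorem proposition3:
  fixes L :: "('a::{field,finite}^'m) set set"
    and M l :: "('a^'m) set"
  assumes "L \<subseteq> plines" and "L \<noteq> {}"
    and "cond_Pt L" and "cond_Pl L" and "cond_Sd L" and "cond_To L"
    and "psubspace M"
    and "l \<in> L" and "l \<inter> M \<in> ppoints"
  shows "(\<not> (\<exists>s\<in>lines_in L M. pmeet l s) \<longrightarrow>
            card L \<ge> CARD('a) * card (lines_in L M) + 1)
       \<and> (\<forall>s \<alpha>. s \<in> lines_in L M \<and> pmeet l s \<and> card {P \<in> qM_points L M. P \<subseteq> s} = \<alpha> \<longrightarrow>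
            int (card L) \<ge> int CARD('a) * int (card (lines_in L M)) - int \<alpha> * int CARD('a)^2
                            + int \<alpha> * int CARD('a) + 1
          \<and> int CARD('a) * int (card (lines_in L M)) - int \<alpha> * int CARD('a)^2
                            + int \<alpha> * int CARD('a) + 1
            \<ge> int CARD('a) * int (card (lines_in L M)) - int CARD('a)^3 + int CARD('a)^2 + 1)"
proof -
  interpret line_set L using assms(1,3-5) by unfold_locales
  have M: "vec.subspace M" using assms(7) by (simp add: psubspace_def)
  show ?thesis
    using card_lines_ge_if_no_meeting[OF M assms(8,9)] card_lines_ge_if_meeting(1)[OF M assms(8,9)]
      card_lines_ge_if_meeting(2)[OF M assms(8,9), THEN cubic_bound_le_alpha_bound]
    by blast
qed

end
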